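(* Let $(E,\le,u)$ be an ordered effect space with pointed positive cone. Let $A$ be a finite set of positive subunital linear maps on $E$ that is closed under composition. If every $T\in A$ is persistent, then every $T\in A$ is unital, i.e. $T(u)=u$.
   Context: An ordered effect space is a triple $(E,\le,u)$: $E$ a real vector space, $\le$ a preorder on $E$ compatible with addition and multiplication by nonnegative scalars, and $u\in E_+=\{x: x\ge0\}$ a distinguished unit. The cone $E_+$ is pointed if $E_+\cap(-E_+)=\{0\}$. A linear map $T:E\to E$ is positive if $T(E_+)\subseteq E_+$, subunital if $T(u)\le u$, unital if $T(u)=u$. A positive map $T$ is persistent if for every $x\in E_+\setminus\{0\}$ one has $T(x)\in E_+\setminus\{0\}$ (i.e. $T$ annihilates no nonzero positive element). *)

theory Defs
  imports Complex_Main
begin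

definition ordered_effect_space :: "('a::real_vector \<Rightarrow> 'a \<Rightarrow> bool) \<Rightarrow> 'a \<Rightarrow> bool" where
  "ordered_effect_space le u \<longleftrightarrow>
     (\<forall>x. le x x) \<and>
     (\<forall>x y z. le x y \<longrightarrow> le y z \<longrightarrow> le x z) \<and>
     (\<forall>x y z. le x y \<longrightarrow> le (x + z) (y + z)) \<and>
     (\<forall>x y c. le x y \<longrightarrow> 0 \<le> c \<longrightarrow> le (c *\<^sub>R x) (c *\<^sub>R y)) \<and>
     le 0 u"

definition pos_cone :: "('a::real_vector \<Rightarrow> 'a \<Rightarrow> bool) \<Rightarrow> 'a set" where
  "pos_cone le = {x. le 0 x}"

definition pointed_cone :: "('a::real_vector \<Rightarrow> 'a \<Rightarrow> bool) \<Rightarrow> bool" where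
  "pointed_cone le \<longleftrightarrow> pos_cone le \<inter> uminus ` pos_cone le = {0}"

definition positive_map :: "('a::real_vector \<Rightarrow> 'a \<Rightarrow> bool) \<Rightarrow> ('a \<Rightarrow> 'a) \<Rightarrow> bool" where
  "positive_map le T \<longleftrightarrow> T ` pos_cone le \<subseteq> pos_cone le"

definition subunital :: "('a::real_vector \<Rightarrow> 'a \<Rightarrow> bool) \<Rightarrow> 'a \<Rightarrow> ('a \<Rightarrow> 'a) \<Rightarrow> bool" where
  "subunital le u T \<longleftrightarrow> le (T u) u"

definition unital :: "'a \<Rightarrow> ('a \<Rightarrow> 'a) \<Rightarrow> bool" where
  "unital u T \<longleftrightarrow> T u = u"

definition persistent :: "('a::real_vector \<Rightarrow> 'a \<Rightarrow> bool) \<Rightarrow> ('a \<Rightarrow> 'a) \<Rightarrow> bool" where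
  "persistent le T \<longleftrightarrow> positive_map le T \<and>
     (\<forall>x \<in> pos_cone le - {0}. T x \<in> pos_cone le - {0})"

end

theory Submission
  imports Defs
begin

text \<open>Positivity and subunitality make the orbit \<open>u \<ge> T u \<ge> T^2 u \<ge> ...\<close> decreasing.
  The powers of \<open>T\<close> lie in the finite set \<open>A\<close>, so \<open>T^(m+1) = T^(q+1)\<close> for some
  \<open>m < q\<close>, and the orbit is squeezed: \<open>T^(m+2) u \<le> T^(m+1) u = T^(q+1) u \<le> T^(m+2) u\<close>.
  Pointedness of the cone gives \<open>T^(m+1) (u - T u) = 0\<close>, and persistence of \<open>T^(m+1)\<close>
  forces the positive element \<open>u - T u\<close> to vanish.\<close>

lemma ordered_effect_space_le_iff_nonneg_diff:
  assumes "ordered_effect_space le u"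
  shows "le x y \<longleftrightarrow> le 0 (y - x)"
proof
  have add_right: "\<And>x y z. le x y \<Longrightarrow> le (x + z) (y + z)"
    using assms unfolding ordered_effect_space_def by blast
  show "le 0 (y - x)" if "le x y"
    using add_right[OF that, of "- x"] by simp
  show "le x y" if "le 0 (y - x)"
    using add_right[OF that, of x] by simp
qed

lemma ordered_effect_space_trans:
  "ordered_effect_space le u \<Longrightarrow> le x y \<Longrightarrow> le y z \<Longrightarrow> le x z"
  unfolding ordered_effect_space_def by blast

lemma pointed_cone_antisym:
  assumes "ordered_effect_space le u" and "pointed_cone le"
    and "le x y" and "le y x"
  shows "x = y"
proof -
  have "le 0 (y - x)" "le 0 (- (y - x))"
    using assms(3,4) ordered_effect_space_le_iff_nonneg_diff[OF assms(1)] by simp_all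
  then have "y - x \<in> pos_cone le \<inter> uminus ` pos_cone le"
    unfolding pos_cone_def by (auto intro: image_eqI[of _ _ "- (y - x)"])
  then show ?thesis
    using assms(2) unfolding pointed_cone_def by auto
qed

lemma positive_linear_map_mono:
  assumes "ordered_effect_space le u" and "linear T" and "positive_map le T"
    and "le x y"
  shows "le (T x) (T y)"
proof -
  have "le 0 (y - x)"
    using assms(1,4) ordered_effect_space_le_iff_nonneg_diff by blast
  then have "le 0 (T (y - x))"
    using assms(3) unfolding positive_map_def pos_cone_def by blast
  moreover have "T (y - x) = T y - T x"
    using assms(2) by (rule linear_diff)
  ultimately show ?thesis
    using assms(1) ordered_effect_space_le_iff_nonneg_diff by metis
qed

lemma linear_funpow: "linear (T :: 'a::real_vector \<Rightarrow> 'a) \<Longrightarrow> linear (T ^^ n)"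
  by (induction n) (simp_all add: module_hom_ident linear_compose id_def)

lemma positive_map_funpow: "positive_map le T \<Longrightarrow> positive_map le (T ^^ n)"
  by (induction n) (auto simp: positive_map_def)

lemma subunital_orbit_antimono:
  assumes "ordered_effect_space le u" and "linear T" and "positive_map le T"
    and "subunital le u T" and "j \<le> k"
  shows "le ((T ^^ k) u) ((T ^^ j) u)"
  using assms(5)
proof (induction k rule: dec_induct)
  case base
  then show ?case
    using assms(1) unfolding ordered_effect_space_def by blast
next
  case (step k)
  have "le ((T ^^ k) (T u)) ((T ^^ k) u)"
    using positive_linear_map_mono[OF assms(1) linear_funpow positive_map_funpow] assms
    unfolding subunital_def by blast
  then have "le ((T ^^ Suc k) u) ((T ^^ k) u)"
    by (simp add: funpow_swap1)
  then show ?case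
    using step.IH ordered_effect_space_trans[OF assms(1)] by blast
qed

lemma unital_if_powers_coincide:
  assumes space: "ordered_effect_space le u" and pointed: "pointed_cone le"
    and T: "linear T" "positive_map le T" "subunital le u T"
    and "m < q" and powers_eq: "T ^^ Suc m = T ^^ Suc q"
    and persistent: "persistent le (T ^^ Suc m)"
  shows "T u = u"
proof -
  have "le ((T ^^ Suc (Suc m)) u) ((T ^^ Suc m) u)"
    by (rule subunital_orbit_antimono[OF space T]) simp
  moreover have "le ((T ^^ Suc q) u) ((T ^^ Suc (Suc m)) u)"
    by (rule subunital_orbit_antimono[OF space T]) (use \<open>m < q\<close> in simp)
  ultimately have "(T ^^ Suc m) u = (T ^^ Suc (Suc m)) u"
    using pointed_cone_antisym[OF space pointed] by (simp only: powers_eq)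
  moreover have "(T ^^ Suc m) (u - T u) = (T ^^ Suc m) u - (T ^^ Suc (Suc m)) u"
    using linear_diff[OF linear_funpow[OF T(1)], of "Suc m" u "T u"]
    by (simp only: funpow_Suc_right comp_def)
  ultimately have "(T ^^ Suc m) (u - T u) = 0"
    by simp
  moreover have "le 0 (u - T u)"
    using T(3) space ordered_effect_space_le_iff_nonneg_diff unfolding subunital_def by blast
  ultimately have "u - T u = 0"
    using persistent unfolding persistent_def pos_cone_def by blast
  then show ?thesis by simp
qed

lemma funpow_Suc_mem_if_comp_closed:
  assumes "T \<in> A" and "\<forall>S \<in> A. \<forall>T \<in> A. S \<circ> T \<in> A"
  shows "T ^^ Suc n \<in> A"
proof (induction n)
  case 0
  then show ?case using assms(1) by simp
next
  case (Suc n)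
  then have "T \<circ> T ^^ Suc n \<in> A"
    using assms by blast
  then show ?case by (simp only: funpow.simps(2))
qed

lemma finite_range_repeats:
  assumes "finite A" and "\<And>n. f n \<in> A"
  obtains m q :: nat where "m < q" and "f m = f q"
proof -
  have "\<not> inj f"
  proof
    assume "inj f"
    then have "finite (UNIV :: nat set)"
      using assms finite_imageD finite_subset by (metis image_subsetI)
    then show False by simp
  qed
  then obtain i j where "i \<noteq> j" "f i = f j"
    unfolding inj_def by blast
  then show ?thesis
    using that by (metis linorder_neqE_nat)
qed

theorem theorem4p13:
  fixes le :: "'a::real_vector \<Rightarrow> 'a \<Rightarrow> bool" and u :: 'a
    and A :: "('a \<Rightarrow> 'a) set"
  assumes "ordered_effect_space le u"
    and "pointed_cone le"
    and "finite A"
    and "\<forall>T \<in> A. linear T \<and> positive_map le T \<and> subunital le u T"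
    and "\<forall>S \<in> A. \<forall>T \<in> A. S \<circ> T \<in> A"
    and "\<forall>T \<in> A. persistent le T"
  shows "\<forall>T \<in> A. unital u T"
proof
  fix T assume "T \<in> A"
  then have powers_in_A: "T ^^ Suc n \<in> A" for n
    using assms(5) by (rule funpow_Suc_mem_if_comp_closed)
  obtain m q where "m < q" "T ^^ Suc m = T ^^ Suc q"
    using finite_range_repeats[OF assms(3) powers_in_A] .
  moreover have "linear T" "positive_map le T" "subunital le u T"
    using assms(4) \<open>T \<in> A\<close> by auto
  ultimately show "unital u T"
    using unital_if_powers_coincide[OF assms(1,2)] assms(6) powers_in_A
    unfolding unital_def by blast
qed

end
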